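(* Let $n_1,n_2,n_3$ be integers with $3\le n_1,n_2\le n_3$ and let $W$ be a subset of the vertex set of $K(\mathbf{n})$. If the landmark graph $\mathcal{G}(W)$ contains a triple loop and a rainbow $2$-$2$-triangle, then $W$ is not a resolving set of $K(\mathbf{n})$.
   Context: $K(\mathbf{n})=K_{n_1}\times K_{n_2}\times K_{n_3}$ is the direct product of complete graphs: vertices are triples $(x_1,x_2,x_3)$, $1\le x_i\le n_i$, adjacent iff they differ in every coordinate. A set $W$ of vertices is resolving if for every two distinct vertices $x,y\notin W$ some $w\in W$ has $d(x,w)\neq d(y,w)$. Landmark graph: $W_{i,a}=\{w\in W: w_i=a\}$; $\mathcal{G}(W)$ is the hypergraph on $W$ whose hyperedges are the nonempty $W_{i,a}$, each colored $i$. A triple loop is a vertex $u\in W$ such that $\{u\}=W_{1,u_1}=W_{2,u_2}=W_{3,u_3}$. A rainbow $2$-$2$-triangle: distinct $w_1,w_2,w_3\in W$ and $\{i,j,k\}=\{1,2,3\}$ with $\{w_1,w_2\}$ a hyperedge of color $i$, $\{w_2,w_3\}$ a hyperedge of color $j$, and $w_1,w_3$ in a common hyperedge of color $k$. *)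

theory Defs
  imports Main "HOL-Library.Extended_Nat"
begin

type_synonym vtx = "nat \<times> nat \<times> nat"

definition coord :: "vtx \<Rightarrow> nat \<Rightarrow> nat" where
  "coord x i = (if i = 1 then fst x else if i = 2 then fst (snd x) else snd (snd x))"

definition Kverts :: "nat \<Rightarrow> nat \<Rightarrow> nat \<Rightarrow> vtx set" where
  "Kverts n1 n2 n3 = {1..n1} \<times> {1..n2} \<times> {1..n3}"

(* adjacency in the direct product: differ in every coordinate *)
definition Kadj :: "nat \<Rightarrow> nat \<Rightarrow> nat \<Rightarrow> vtx \<Rightarrow> vtx \<Rightarrow> bool" where
  "Kadj n1 n2 n3 x y \<longleftrightarrow> x \<in> Kverts n1 n2 n3 \<and> y \<in> Kverts n1 n2 n3 \<and>
     (\<forall>i\<in>{1,2,3::nat}. coord x i \<noteq> coord y i)"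

fun Kwalk :: "nat \<Rightarrow> nat \<Rightarrow> nat \<Rightarrow> nat \<Rightarrow> vtx \<Rightarrow> vtx \<Rightarrow> bool" where
  "Kwalk n1 n2 n3 0 x y \<longleftrightarrow> x = y \<and> x \<in> Kverts n1 n2 n3"
| "Kwalk n1 n2 n3 (Suc k) x y \<longleftrightarrow> (\<exists>z. Kadj n1 n2 n3 x z \<and> Kwalk n1 n2 n3 k z y)"

definition Kdist :: "nat \<Rightarrow> nat \<Rightarrow> nat \<Rightarrow> vtx \<Rightarrow> vtx \<Rightarrow> enat" where
  "Kdist n1 n2 n3 x y = (INF k \<in> {k. Kwalk n1 n2 n3 k x y}. enat k)"

definition resolving :: "nat \<Rightarrow> nat \<Rightarrow> nat \<Rightarrow> vtx set \<Rightarrow> bool" where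
  "resolving n1 n2 n3 W \<longleftrightarrow> W \<subseteq> Kverts n1 n2 n3 \<and>
     (\<forall>x\<in>Kverts n1 n2 n3 - W. \<forall>y\<in>Kverts n1 n2 n3 - W. x \<noteq> y \<longrightarrow>
        (\<exists>w\<in>W. Kdist n1 n2 n3 x w \<noteq> Kdist n1 n2 n3 y w))"

definition Wcls :: "vtx set \<Rightarrow> nat \<Rightarrow> nat \<Rightarrow> vtx set" where
  "Wcls W i a = {w \<in> W. coord w i = a}"

(* hyperedge of color i of the landmark graph: a nonempty W_{i,a} *)
definition hyperedge :: "vtx set \<Rightarrow> nat \<Rightarrow> vtx set \<Rightarrow> bool" where
  "hyperedge W i E \<longleftrightarrow> i \<in> {1,2,3} \<and> (\<exists>a. E = Wcls W i a \<and> E \<noteq> {})"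

definition triple_loop :: "vtx set \<Rightarrow> vtx \<Rightarrow> bool" where
  "triple_loop W u \<longleftrightarrow> u \<in> W \<and>
     Wcls W 1 (coord u 1) = {u} \<and> Wcls W 2 (coord u 2) = {u} \<and> Wcls W 3 (coord u 3) = {u}"

definition rainbow_22_triangle :: "vtx set \<Rightarrow> bool" where
  "rainbow_22_triangle W \<longleftrightarrow> (\<exists>w1 w2 w3 i j k.
     w1 \<in> W \<and> w2 \<in> W \<and> w3 \<in> W \<and> w1 \<noteq> w2 \<and> w2 \<noteq> w3 \<and> w1 \<noteq> w3 \<and>
     {i, j, k} = {1, 2, 3::nat} \<and>
     hyperedge W i {w1, w2} \<and> hyperedge W j {w2, w3} \<and>
     (\<exists>E. hyperedge W k E \<and> w1 \<in> E \<and> w3 \<in> E))"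

end

theory Submission
  imports Defs
begin

text \<open>Since every n_i \<ge> 3, two distinct vertices are at distance 1 if they differ in every
  coordinate and at distance 2 otherwise; so a landmark w cannot tell x from y as soon as x and y
  both share a coordinate with w or both do not. Let u be the triple loop and let w1 w2 w3
  be the rainbow triangle, with w1, w2 the only landmarks with i-th coordinate a,
  w2, w3 the only ones with j-th coordinate b and w1, w3 agreeing in the
  k-th coordinate c. Take x = w1 with its j-th coordinate replaced by that of u, and
  y = w3 with its i-th coordinate replaced by that of u. The landmarks sharing a coordinate
  with x are w1, w2, u and those with k-th coordinate c; the same holds for y.
  Because u is a triple loop, x and y are not landmarks, and x \<noteq> y.\<close>

definition share_coord :: "vtx \<Rightarrow> vtx \<Rightarrow> bool" where
  "share_coord x y \<longleftrightarrow> (\<exists>l\<in>{1,2,3::nat}. coord x l = coord y l)"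

definition set_coord :: "vtx \<Rightarrow> nat \<Rightarrow> nat \<Rightarrow> vtx" where
  "set_coord x i v =
     (if i = 1 then v else coord x 1, if i = 2 then v else coord x 2, if i = 3 then v else coord x 3)"

lemma coord_set_coord:
  "l \<in> {1,2,3} \<Longrightarrow> coord (set_coord x i v) l = (if l = i then v else coord x l)"
  unfolding set_coord_def coord_def by auto

lemma Kverts_iff_coord:
  "x \<in> Kverts n1 n2 n3 \<longleftrightarrow>
     coord x 1 \<in> {1..n1} \<and> coord x 2 \<in> {1..n2} \<and> coord x 3 \<in> {1..n3}"
  unfolding Kverts_def coord_def by (cases x) auto

lemma set_coord_in_Kverts:
  assumes "x \<in> Kverts n1 n2 n3" and "y \<in> Kverts n1 n2 n3"
  shows "set_coord x i (coord y i) \<in> Kverts n1 n2 n3"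
  using assms unfolding Kverts_iff_coord by (auto simp: coord_set_coord)

lemma Kadj_iff_not_share_coord:
  "x \<in> Kverts n1 n2 n3 \<Longrightarrow> y \<in> Kverts n1 n2 n3 \<Longrightarrow> Kadj n1 n2 n3 x y \<longleftrightarrow> \<not> share_coord x y"
  unfolding Kadj_def share_coord_def by blast

lemma share_coord_iff_perm:
  "{i, j, k} = {1,2,3::nat} \<Longrightarrow>
     share_coord x y \<longleftrightarrow> coord x i = coord y i \<or> coord x j = coord y j \<or> coord x k = coord y k"
  unfolding share_coord_def by (metis insert_iff singletonD)

lemma ex_atLeastAtMost_avoiding_two:
  assumes "3 \<le> (n::nat)"
  obtains c where "c \<in> {1..n}" "c \<noteq> a" "c \<noteq> b"
proof -
  have "\<not> {1,2,3} \<subseteq> {a, b}" by auto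
  then obtain c where "c \<in> {1,2,3::nat}" "c \<noteq> a" "c \<noteq> b" by blast
  moreover from this assms have "c \<in> {1..n}" by auto
  ultimately show thesis using that by blast
qed

lemma Kwalk_Suc_0_iff: "Kwalk n1 n2 n3 (Suc 0) x y \<longleftrightarrow> Kadj n1 n2 n3 x y"
  unfolding Kwalk.simps by (blast dest: Kadj_def[THEN iffD1])

lemma Kwalk_2_if_ge_3:
  assumes "x \<in> Kverts n1 n2 n3" "y \<in> Kverts n1 n2 n3" "3 \<le> n1" "3 \<le> n2" "3 \<le> n3"
  shows "Kwalk n1 n2 n3 2 x y"
proof -
  obtain c1 where c1: "c1 \<in> {1..n1}" "c1 \<noteq> coord x 1" "c1 \<noteq> coord y 1"
    using ex_atLeastAtMost_avoiding_two \<open>3 \<le> n1\<close> .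
  obtain c2 where c2: "c2 \<in> {1..n2}" "c2 \<noteq> coord x 2" "c2 \<noteq> coord y 2"
    using ex_atLeastAtMost_avoiding_two \<open>3 \<le> n2\<close> .
  obtain c3 where c3: "c3 \<in> {1..n3}" "c3 \<noteq> coord x 3" "c3 \<noteq> coord y 3"
    using ex_atLeastAtMost_avoiding_two \<open>3 \<le> n3\<close> .
  have z: "(c1, c2, c3) \<in> Kverts n1 n2 n3" using c1 c2 c3 by (simp add: Kverts_def)
  have "Kadj n1 n2 n3 x (c1, c2, c3)" "Kadj n1 n2 n3 (c1, c2, c3) y"
    using assms z c1 c2 c3 by (auto simp: Kadj_def coord_def)
  then show ?thesis
    using assms(2) unfolding numeral_2_eq_2 Kwalk.simps by (intro exI[of _ "(c1, c2, c3)"]) blast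
qed

lemma Kdist_eq_least_walk:
  assumes "Kwalk n1 n2 n3 k x y" and "\<And>k'. k' < k \<Longrightarrow> \<not> Kwalk n1 n2 n3 k' x y"
  shows "Kdist n1 n2 n3 x y = enat k"
  unfolding Kdist_def
proof (rule antisym)
  show "(INF k\<in>{k. Kwalk n1 n2 n3 k x y}. enat k) \<le> enat k"
    using assms(1) by (auto intro: INF_lower)
  show "enat k \<le> (INF k\<in>{k. Kwalk n1 n2 n3 k x y}. enat k)"
  proof (rule INF_greatest)
    fix i assume "i \<in> {k. Kwalk n1 n2 n3 k x y}"
    with assms(2) have "\<not> i < k" by blast
    then show "enat k \<le> enat i" by simp
  qed
qed

lemma Kdist_distinct:
  assumes "x \<in> Kverts n1 n2 n3" "y \<in> Kverts n1 n2 n3" "x \<noteq> y"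
    and "3 \<le> n1" "3 \<le> n2" "3 \<le> n3"
  shows "Kdist n1 n2 n3 x y = (if share_coord x y then 2 else 1)"
proof (cases "share_coord x y")
  case True
  have "Kdist n1 n2 n3 x y = enat 2"
  proof (rule Kdist_eq_least_walk)
    show "Kwalk n1 n2 n3 2 x y" using Kwalk_2_if_ge_3 assms by blast
    have "\<not> Kwalk n1 n2 n3 0 x y" using \<open>x \<noteq> y\<close> by simp
    moreover have "\<not> Kwalk n1 n2 n3 (Suc 0) x y"
      using True Kadj_iff_not_share_coord[OF assms(1,2)] unfolding Kwalk_Suc_0_iff by simp
    ultimately show "\<not> Kwalk n1 n2 n3 k' x y" if "k' < 2" for k'
      using less_2_cases[OF that] by metis
  qed
  with True show ?thesis by (simp add: numeral_eq_enat)
next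
  case False
  have "Kdist n1 n2 n3 x y = enat 1"
  proof (rule Kdist_eq_least_walk)
    show "Kwalk n1 n2 n3 1 x y"
      using False Kadj_iff_not_share_coord[OF assms(1,2)] Kwalk_Suc_0_iff
      unfolding One_nat_def by blast
    show "\<not> Kwalk n1 n2 n3 k' x y" if "k' < 1" for k'
      using that \<open>x \<noteq> y\<close> by simp
  qed
  with False show ?thesis by (simp add: one_enat_def)
qed

lemma not_resolving_if_same_shared_landmarks:
  assumes "3 \<le> n1" "3 \<le> n2" "3 \<le> n3" and "W \<subseteq> Kverts n1 n2 n3"
    and "x \<in> Kverts n1 n2 n3 - W" "y \<in> Kverts n1 n2 n3 - W" "x \<noteq> y"
    and "\<And>w. w \<in> W \<Longrightarrow> share_coord x w \<longleftrightarrow> share_coord y w"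
  shows "\<not> resolving n1 n2 n3 W"
proof -
  have "Kdist n1 n2 n3 x w = Kdist n1 n2 n3 y w" if "w \<in> W" for w
  proof -
    have w: "w \<in> Kverts n1 n2 n3" "x \<noteq> w" "y \<noteq> w" using assms(4-6) that by auto
    have "Kdist n1 n2 n3 x w = (if share_coord x w then 2 else 1)"
      using Kdist_distinct[of x n1 n2 n3 w] assms(1-3,5) w by simp
    also have "\<dots> = (if share_coord y w then 2 else 1)" using assms(8) that by simp
    also have "\<dots> = Kdist n1 n2 n3 y w"
      using Kdist_distinct[of y n1 n2 n3 w] assms(1-3,6) w by simp
    finally show ?thesis .
  qed
  with assms(5-7) show ?thesis unfolding resolving_def by blast
qed

lemma mem_Wcls_iff: "w \<in> Wcls W i a \<longleftrightarrow> w \<in> W \<and> coord w i = a"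
  unfolding Wcls_def by simp

lemma triple_loop_coord_eq_iff:
  assumes "triple_loop W u" "w \<in> W" "l \<in> {1,2,3}"
  shows "coord w l = coord u l \<longleftrightarrow> w = u"
proof -
  have "Wcls W l (coord u l) = {u}" using assms(1,3) unfolding triple_loop_def by auto
  then have "w \<in> Wcls W l (coord u l) \<longleftrightarrow> w = u" by simp
  with assms(2) show ?thesis by (simp add: mem_Wcls_iff)
qed

lemma hyperedge_pair_coord_eq_iff:
  assumes "hyperedge W i {w1, w2}" "w \<in> W"
  shows "coord w i = coord w1 i \<longleftrightarrow> w = w1 \<or> w = w2"
proof -
  obtain a where a: "{w1, w2} = Wcls W i a" using assms(1) unfolding hyperedge_def by blast
  then have "coord w1 i = a" by (auto simp: mem_Wcls_iff)
  with a assms(2) show ?thesis by (metis insert_iff singleton_iff mem_Wcls_iff)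
qed

lemma rainbow_22_triangleE:
  assumes "rainbow_22_triangle W"
  obtains w1 w2 w3 i j k where "w1 \<in> W" "w2 \<in> W" "w3 \<in> W"
    "w1 \<noteq> w2" "w2 \<noteq> w3" "{i, j, k} = {1,2,3::nat}"
    "hyperedge W i {w1, w2}" "hyperedge W j {w2, w3}" "coord w1 k = coord w3 k"
proof -
  obtain w1 w2 w3 i j k E where "w1 \<in> W" "w2 \<in> W" "w3 \<in> W" "w1 \<noteq> w2" "w2 \<noteq> w3"
    "{i, j, k} = {1,2,3::nat}" "hyperedge W i {w1, w2}" "hyperedge W j {w2, w3}"
    and E: "hyperedge W k E" "w1 \<in> E" "w3 \<in> E"
    using assms unfolding rainbow_22_triangle_def by blast
  moreover obtain c where "E = Wcls W k c" using E(1) unfolding hyperedge_def by blast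
  then have "coord w1 k = coord w3 k" using E(2,3) by (simp add: mem_Wcls_iff)
  ultimately show thesis using that by blast
qed

lemma twins_from_triple_loop_and_rainbow_triangle:
  assumes W: "W \<subseteq> Kverts n1 n2 n3" and "triple_loop W u"
    and w: "w1 \<in> W" "w2 \<in> W" "w3 \<in> W" "w1 \<noteq> w2" "w2 \<noteq> w3"
    and ijk: "{i, j, k} = {1,2,3::nat}"
    and hi: "hyperedge W i {w1, w2}" and hj: "hyperedge W j {w2, w3}"
    and hk: "coord w1 k = coord w3 k"
  defines "x \<equiv> set_coord w1 j (coord u j)" and "y \<equiv> set_coord w3 i (coord u i)"
  shows "x \<in> Kverts n1 n2 n3 - W" "y \<in> Kverts n1 n2 n3 - W" "x \<noteq> y"
    and "\<And>w. w \<in> W \<Longrightarrow> share_coord x w \<longleftrightarrow> share_coord y w"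
proof -
  have ijk_mem: "i \<in> {1,2,3}" "j \<in> {1,2,3}" "k \<in> {1,2,3}" using ijk by auto
  have "card {i, j, k} = 3" unfolding ijk by simp
  then have ijk_distinct: "i \<noteq> j" "j \<noteq> k" "i \<noteq> k"
    by (auto simp: card_insert_if split: if_splits)
  have "u \<in> W" using \<open>triple_loop W u\<close> unfolding triple_loop_def by blast
  note loop = triple_loop_coord_eq_iff[OF \<open>triple_loop W u\<close>]
  note pair_i = hyperedge_pair_coord_eq_iff[OF hi] and pair_j = hyperedge_pair_coord_eq_iff[OF hj]
  have cx: "coord x i = coord w1 i" "coord x j = coord u j" "coord x k = coord w3 k"
    using ijk_mem ijk_distinct hk by (auto simp: x_def coord_set_coord)
  have cy: "coord y i = coord u i" "coord y j = coord w2 j" "coord y k = coord w3 k"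
    using ijk_mem ijk_distinct pair_j[OF w(3)] by (auto simp: y_def coord_set_coord)
  have u_i: "coord u i \<noteq> coord w1 i"
  proof
    assume "coord u i = coord w1 i"
    then have "coord w1 i = coord u i" "coord w2 i = coord u i" using pair_i[OF w(2)] by auto
    then show False using loop[OF w(1) ijk_mem(1)] loop[OF w(2) ijk_mem(1)] w(4) by simp
  qed
  have u_j: "coord u j \<noteq> coord w2 j"
  proof
    assume "coord u j = coord w2 j"
    then have "coord w2 j = coord u j" "coord w3 j = coord u j" using pair_j[OF w(3)] by auto
    then show False using loop[OF w(2) ijk_mem(2)] loop[OF w(3) ijk_mem(2)] w(5) by simp
  qed
  have "w1 \<in> Kverts n1 n2 n3" "w3 \<in> Kverts n1 n2 n3" "u \<in> Kverts n1 n2 n3"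
    using W w \<open>u \<in> W\<close> by auto
  then have "x \<in> Kverts n1 n2 n3" "y \<in> Kverts n1 n2 n3"
    unfolding x_def y_def by (simp_all add: set_coord_in_Kverts)
  moreover have "x \<notin> W"
  proof
    assume "x \<in> W"
    then have "x = u" using loop[OF _ ijk_mem(2)] cx(2) by blast
    then show False using cx(1) u_i by simp
  qed
  moreover have "y \<notin> W"
  proof
    assume "y \<in> W"
    then have "y = u" using loop[OF _ ijk_mem(1)] cy(1) by blast
    then show False using cy(2) u_j by simp
  qed
  ultimately show "x \<in> Kverts n1 n2 n3 - W" "y \<in> Kverts n1 n2 n3 - W" by simp_all
  show "x \<noteq> y" using cx(1) cy(1) u_i by metis
  fix w assume "w \<in> W"
  have "share_coord x w \<longleftrightarrow> w = w1 \<or> w = w2 \<or> w = u \<or> coord w k = coord w3 k"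
    unfolding share_coord_iff_perm[OF ijk] cx
    using pair_i[OF \<open>w \<in> W\<close>] loop[OF \<open>w \<in> W\<close> ijk_mem(2)] by auto
  moreover have "share_coord y w \<longleftrightarrow> w = u \<or> w = w2 \<or> w = w3 \<or> coord w k = coord w3 k"
    unfolding share_coord_iff_perm[OF ijk] cy
    using pair_j[OF \<open>w \<in> W\<close>] loop[OF \<open>w \<in> W\<close> ijk_mem(1)] by auto
  ultimately show "share_coord x w \<longleftrightarrow> share_coord y w" using hk by auto
qed

theorem mainTheorem3:
  fixes n1 n2 n3 :: nat and W :: "vtx set"
  assumes "3 \<le> n1" and "3 \<le> n2" and "n1 \<le> n3" and "n2 \<le> n3"
    and "W \<subseteq> Kverts n1 n2 n3"
    and "\<exists>u. triple_loop W u"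
    and "rainbow_22_triangle W"
  shows "\<not> resolving n1 n2 n3 W"
proof -
  obtain u where u: "triple_loop W u" using assms(6) by blast
  obtain w1 w2 w3 i j k where "w1 \<in> W" "w2 \<in> W" "w3 \<in> W" "w1 \<noteq> w2" "w2 \<noteq> w3"
    and "{i, j, k} = {1,2,3::nat}" "hyperedge W i {w1, w2}" "hyperedge W j {w2, w3}"
    and "coord w1 k = coord w3 k"
    using rainbow_22_triangleE[OF assms(7)] by metis
  note twins = twins_from_triple_loop_and_rainbow_triangle[OF assms(5) u this]
  show ?thesis
    using not_resolving_if_same_shared_landmarks[OF assms(1,2) _ assms(5) twins] assms(1,3) by simp
qed

end
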